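(* Let $A$ be an $n\times n$ real symmetric matrix, let $\alpha \subseteq \{1,\dots,n\}$ be a set of P-vertices of $A$, and let $\beta \subseteq \{1,\dots,n\}$ be such that $\alpha \subseteq \beta$ and the rows of $A$ indexed by $\beta$ form a basis of the row space of $A$. If $\alpha$ is a P-set of the principal submatrix $A[\beta]$ (with indices of $\alpha$ understood as indices of $A[\beta]$), then $\alpha$ is a P-set of $A$.
   Context: All matrices are real. $A[\beta]$ denotes the principal submatrix of $A$ with rows and columns indexed by $\beta$. For an $n\times n$ matrix $A$ and $\alpha \subseteq \{1,\dots,n\}$, $A(\alpha)$ denotes the principal submatrix obtained by deleting the rows and columns indexed by $\alpha$, and $\nu(A)$ denotes the nullity of $A$. Index $i$ is a P-vertex of $A$ if $\nu(A(\{i\})) = \nu(A)+1$. A set $\alpha$ is a P-set of $A$ if $\nu(A(\alpha)) = \nu(A) + |\alpha|$. *)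

theory Defs
  imports "Jordan_Normal_Form.DL_Submatrix" "Jordan_Normal_Form.VS_Connect"
          "Jordan_Normal_Form.Matrix_Kernel"
begin

text \<open>Matrices are JNF matrices; indices are 0-based, i.e. the index set is {0..<n}.\<close>

definition nullity :: "real mat \<Rightarrow> nat" where
  "nullity A = kernel_dim A"

definition del_princ :: "real mat \<Rightarrow> nat set \<Rightarrow> real mat" where
  "del_princ A \<alpha> = submatrix A (- \<alpha>) (- \<alpha>)"

text \<open>A[beta]: principal submatrix on rows/columns beta (reindexed to 0..<card).\<close>
definition princ_sub :: "real mat \<Rightarrow> nat set \<Rightarrow> real mat" where
  "princ_sub A \<beta> = submatrix A \<beta> \<beta>"

text \<open>Position of index a inside the (ordered) index set beta, i.e. the index of a
  as an index of A[beta].\<close>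
definition pos_in :: "nat set \<Rightarrow> nat \<Rightarrow> nat" where
  "pos_in \<beta> a = card {b \<in> \<beta>. b < a}"

definition P_vertex :: "real mat \<Rightarrow> nat \<Rightarrow> bool" where
  "P_vertex A i \<longleftrightarrow> i < dim_row A \<and> nullity (del_princ A {i}) = nullity A + 1"

definition P_set :: "real mat \<Rightarrow> nat set \<Rightarrow> bool" where
  "P_set A \<alpha> \<longleftrightarrow> \<alpha> \<subseteq> {..<dim_row A} \<and> nullity (del_princ A \<alpha>) = nullity A + card \<alpha>"

definition rows_basis :: "real mat \<Rightarrow> nat set \<Rightarrow> bool" where
  "rows_basis A \<beta> \<longleftrightarrow> \<beta> \<subseteq> {..<dim_row A} \<and> inj_on (row A) \<beta>
     \<and> module.lin_indpt class_ring (module_vec TYPE(real) (dim_col A)) (row A ` \<beta>)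
     \<and> module.span class_ring (module_vec TYPE(real) (dim_col A)) (row A ` \<beta>)
         = vec_space.row_space (dim_col A) A"

end

theory Submission
  imports Defs
begin

text \<open>Every P-vertex \<open>i\<close> of \<open>A\<close> forces \<open>x\<^sub>i = 0\<close> for all \<open>x\<close> in the kernel.
  Given this vanishing, \<open>\<alpha>\<close> is a P-set of a square matrix \<open>M\<close> iff every vector supported
  on \<open>\<alpha>\<close> equals \<open>M x\<close> for some \<open>x\<close> vanishing on \<open>\<alpha>\<close>: by rank-nullity, the nullity of
  \<open>M(\<alpha>)\<close> exceeds that of \<open>M\<close> by the rank of the border block \<open>M[\<alpha>, -\<alpha>]\<close> restricted to
  \<open>ker M(\<alpha>)\<close>. For symmetric \<open>A\<close> whose rows \<open>\<beta>\<close> form a basis of the row space,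
  \<open>A[\<beta>]\<close> is nonsingular, and every row outside \<open>\<beta>\<close> is a combination of the rows in
  \<open>\<beta>\<close> with coefficients vanishing on \<open>\<alpha>\<close>. Hence solutions for \<open>A[\<beta>]\<close>, extended by
  zero, are solutions for \<open>A\<close>.\<close>

lemma
  assumes "s < card {a. a < n \<and> a \<in> J}"
  shows pick_mem_bounded: "pick J s \<in> J"
    and pos_in_pick: "pos_in J (pick J s) = s"
proof -
  let ?Jn = "{a. a < n \<and> a \<in> J}"
  have eq: "pick J s = pick ?Jn s" by (rule pick_reduce_set[OF assms])
  have "pick ?Jn s \<in> ?Jn" by (rule pick_in_set_le[OF assms])
  then show "pick J s \<in> J" using eq by auto
  have "card {a \<in> ?Jn. a < pick ?Jn s} = s" by (rule card_pick_le[OF assms])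
  moreover have "{a \<in> ?Jn. a < pick ?Jn s} = {a \<in> J. a < pick J s}"
    using eq pick_le[OF assms] by auto
  ultimately show "pos_in J (pick J s) = s" unfolding pos_in_def by simp
qed

lemma pick_pos_in: "t \<in> J \<Longrightarrow> pick J (pos_in J t) = t"
  unfolding pos_in_def by (rule pick_card_in_set)

lemma pos_in_less_card:
  assumes "t \<in> J" "t < n"
  shows "pos_in J t < card {a. a < n \<and> a \<in> J}"
proof -
  have "{a \<in> J. a < t} \<subset> {a. a < n \<and> a \<in> J}" using assms by auto
  then show ?thesis unfolding pos_in_def by (intro psubset_card_mono) auto
qed

lemma pos_in_UNIV [simp]: "pos_in UNIV t = t"
  by (simp add: pos_in_def)

lemma card_bounded_eq:
  assumes "J \<subseteq> {..<n}"
  shows "card {a. a < n \<and> a \<in> J} = card J"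
proof -
  have "{a. a < n \<and> a \<in> J} = J" using assms by auto
  then show ?thesis by simp
qed

lemma bij_betw_pick: "bij_betw (pick J) {..<card {a. a < n \<and> a \<in> J}} {a. a < n \<and> a \<in> J}"
proof (rule bij_betw_imageI)
  show "inj_on (pick J) {..<card {a. a < n \<and> a \<in> J}}"
    by (intro inj_onI) (metis lessThan_iff pos_in_pick)
  show "pick J ` {..<card {a. a < n \<and> a \<in> J}} = {a. a < n \<and> a \<in> J}"
    using pick_mem_bounded pick_le pick_pos_in pos_in_less_card
    by (auto simp: image_iff) (metis lessThan_iff)
qed

lemma pos_in_less_iff:
  assumes "finite \<beta>" "a \<in> \<beta>" "t \<in> \<beta>"
  shows "pos_in \<beta> a < pos_in \<beta> t \<longleftrightarrow> a < t"
proof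
  assume "a < t"
  then have "{x \<in> \<beta>. x < a} \<subset> {x \<in> \<beta>. x < t}" using assms by auto
  then show "pos_in \<beta> a < pos_in \<beta> t" unfolding pos_in_def
    by (intro psubset_card_mono) (use assms in auto)
next
  assume "pos_in \<beta> a < pos_in \<beta> t"
  moreover have "pos_in \<beta> t \<le> pos_in \<beta> a" if "t \<le> a"
    unfolding pos_in_def using that assms by (intro card_mono) auto
  ultimately show "a < t" by linarith
qed

lemma inj_on_pos_in: "finite \<beta> \<Longrightarrow> inj_on (pos_in \<beta>) \<beta>"
  by (intro inj_onI) (metis linorder_neq_iff pos_in_less_iff less_irrefl)

lemma pos_in_image_pos_in:
  assumes "finite \<beta>" "\<alpha> \<subseteq> \<beta>" "t \<in> \<alpha>"
  shows "pos_in (pos_in \<beta> ` \<alpha>) (pos_in \<beta> t) = pos_in \<alpha> t"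
proof -
  have inj: "inj_on (pos_in \<beta>) \<alpha>"
    using inj_on_pos_in[OF assms(1)] assms(2) inj_on_subset by blast
  have "{a' \<in> pos_in \<beta> ` \<alpha>. a' < pos_in \<beta> t} = pos_in \<beta> ` {a \<in> \<alpha>. a < t}"
    using pos_in_less_iff[OF assms(1)] assms by auto
  then show ?thesis
    using card_image[OF inj_on_subset[OF inj, of "{a \<in> \<alpha>. a < t}"]] by (simp add: pos_in_def)
qed

lemma pos_in_image_bounds:
  assumes "finite \<beta>" "\<alpha> \<subseteq> \<beta>"
  shows "pos_in \<beta> ` \<alpha> \<subseteq> {..<card \<beta>}" and "card (pos_in \<beta> ` \<alpha>) = card \<alpha>"
proof -
  have "pos_in \<beta> t < card \<beta>" if "t \<in> \<beta>" for t
  proof -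
    have "{b \<in> \<beta>. b < t} \<subset> \<beta>" using that by auto
    then show ?thesis unfolding pos_in_def using assms(1) by (rule psubset_card_mono[rotated])
  qed
  then show "pos_in \<beta> ` \<alpha> \<subseteq> {..<card \<beta>}" using assms(2) by auto
  show "card (pos_in \<beta> ` \<alpha>) = card \<alpha>"
    using card_image[OF inj_on_subset[OF inj_on_pos_in[OF assms(1)] assms(2)]] .
qed

definition extend_vec :: "nat set \<Rightarrow> nat \<Rightarrow> 'a :: zero vec \<Rightarrow> 'a vec" where
  "extend_vec J n y = vec n (\<lambda>t. if t \<in> J then y $ pos_in J t else 0)"

definition restrict_vec :: "nat set \<Rightarrow> nat \<Rightarrow> 'a vec \<Rightarrow> 'a vec" where
  "restrict_vec J n x = vec (card {a. a < n \<and> a \<in> J}) (\<lambda>s. x $ pick J s)"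

lemma extend_vec_carrier [simp]: "extend_vec J n y \<in> carrier_vec n"
  and dim_extend_vec [simp]: "dim_vec (extend_vec J n y) = n"
  unfolding extend_vec_def by simp_all

lemma extend_vec_index:
  "t < n \<Longrightarrow> extend_vec J n y $ t = (if t \<in> J then y $ pos_in J t else 0)"
  unfolding extend_vec_def by simp

lemma restrict_vec_carrier [simp]: "restrict_vec J n x \<in> carrier_vec (card {a. a < n \<and> a \<in> J})"
  and dim_restrict_vec [simp]: "dim_vec (restrict_vec J n x) = card {a. a < n \<and> a \<in> J}"
  unfolding restrict_vec_def by simp_all

lemma restrict_vec_index:
  "s < card {a. a < n \<and> a \<in> J} \<Longrightarrow> restrict_vec J n x $ s = x $ pick J s"
  unfolding restrict_vec_def by simp

lemma extend_vec_UNIV: "x \<in> carrier_vec n \<Longrightarrow> extend_vec UNIV n x = x"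
  by (intro eq_vecI) (auto simp: extend_vec_index)

lemma restrict_vec_UNIV: "x \<in> carrier_vec n \<Longrightarrow> restrict_vec UNIV n x = x"
  by (intro eq_vecI) (auto simp: restrict_vec_def pick_UNIV)

lemma restrict_extend_vec:
  "y \<in> carrier_vec (card {a. a < n \<and> a \<in> J}) \<Longrightarrow> restrict_vec J n (extend_vec J n y) = y"
  by (intro eq_vecI) (auto simp: restrict_vec_index extend_vec_index pick_le pick_mem_bounded pos_in_pick)

lemma extend_restrict_vec:
  assumes "x \<in> carrier_vec n" "\<And>t. t < n \<Longrightarrow> t \<notin> J \<Longrightarrow> x $ t = 0"
  shows "extend_vec J n (restrict_vec J n x) = x"
  using assms
  by (intro eq_vecI) (auto simp: extend_vec_index restrict_vec_index pos_in_less_card pick_pos_in)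

lemma restrict_vec_eq_0_iff:
  assumes "x \<in> carrier_vec n"
  shows "restrict_vec J n x = 0\<^sub>v (card {a. a < n \<and> a \<in> J}) \<longleftrightarrow> (\<forall>t<n. t \<in> J \<longrightarrow> x $ t = 0)"
proof
  assume "restrict_vec J n x = 0\<^sub>v (card {a. a < n \<and> a \<in> J})"
  then show "\<forall>t<n. t \<in> J \<longrightarrow> x $ t = 0"
    by (metis index_zero_vec(1) pick_pos_in pos_in_less_card restrict_vec_index)
qed (auto simp: restrict_vec_index pick_le pick_mem_bounded intro!: eq_vecI)

lemma extend_vec_eq_iff:
  assumes "x \<in> carrier_vec n" "y \<in> carrier_vec (card {a. a < n \<and> a \<in> J})"
  shows "x = extend_vec J n y \<longleftrightarrow>
    restrict_vec J n x = y \<and> restrict_vec (-J) n x = 0\<^sub>v (card {a. a < n \<and> a \<in> -J})"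
proof
  assume x: "x = extend_vec J n y"
  have "restrict_vec (-J) n x = 0\<^sub>v (card {a. a < n \<and> a \<in> -J})"
    unfolding restrict_vec_eq_0_iff[OF assms(1)] using x by (simp add: extend_vec_index)
  then show "restrict_vec J n x = y \<and> restrict_vec (-J) n x = 0\<^sub>v (card {a. a < n \<and> a \<in> -J})"
    using x assms(2) by (simp add: restrict_extend_vec)
next
  assume r: "restrict_vec J n x = y \<and> restrict_vec (-J) n x = 0\<^sub>v (card {a. a < n \<and> a \<in> -J})"
  then have "\<forall>t<n. t \<in> -J \<longrightarrow> x $ t = 0"
    using restrict_vec_eq_0_iff[OF assms(1), of "-J"] by blast
  then show "x = extend_vec J n y" using r extend_restrict_vec[OF assms(1), of J] by auto
qed

lemma submatrix_mult_vec:
  fixes M :: "'a :: comm_ring_1 mat"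
  assumes M: "M \<in> carrier_mat nr nc" and y: "y \<in> carrier_vec (card {j. j < nc \<and> j \<in> J})"
  shows "submatrix M I J *\<^sub>v y = restrict_vec I nr (M *\<^sub>v extend_vec J nc y)"
proof (rule eq_vecI)
  let ?m = "card {j. j < nc \<and> j \<in> J}"
  let ?Jn = "{j. j < nc \<and> j \<in> J}"
  fix s assume "s < dim_vec (restrict_vec I nr (M *\<^sub>v extend_vec J nc y))"
  then have s: "s < card {i. i < nr \<and> i \<in> I}" by (simp add: restrict_vec_def)
  let ?p = "pick I s"
  have p: "?p < nr" using pick_le[OF s] .
  have "(submatrix M I J *\<^sub>v y) $ s = (\<Sum>j<?m. M $$ (?p, pick J j) * y $ j)"
    using s y M
    by (auto simp: scalar_prod_def submatrix_index dim_submatrix lessThan_atLeast0 intro!: sum.cong)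
  also have "\<dots> = (\<Sum>j<?m. M $$ (?p, pick J j) * y $ pos_in J (pick J j))"
    using pos_in_pick by (intro sum.cong) auto
  also have "\<dots> = (\<Sum>t\<in>?Jn. M $$ (?p, t) * y $ pos_in J t)"
    by (rule sum.reindex_bij_betw[OF bij_betw_pick])
  also have "\<dots> = (\<Sum>t<nc. M $$ (?p, t) * (if t \<in> J then y $ pos_in J t else 0))"
    by (rule sum.mono_neutral_cong_left) auto
  also have "\<dots> = (M *\<^sub>v extend_vec J nc y) $ ?p"
    using M p by (auto simp: scalar_prod_def extend_vec_index lessThan_atLeast0 intro!: sum.cong)
  finally show "(submatrix M I J *\<^sub>v y) $ s = restrict_vec I nr (M *\<^sub>v extend_vec J nc y) $ s"
    using s M by (simp add: restrict_vec_index)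
qed (use M in \<open>simp add: dim_submatrix restrict_vec_def\<close>)

lemma submatrix_carrier_mat:
  "M \<in> carrier_mat nr nc \<Longrightarrow>
    submatrix M I J \<in> carrier_mat (card {i. i < nr \<and> i \<in> I}) (card {j. j < nc \<and> j \<in> J})"
  by (intro carrier_matI) (auto simp: dim_submatrix)

lemma row_selection_mult_vec:
  fixes x :: "'a :: comm_ring_1 vec"
  assumes "x \<in> carrier_vec n"
  shows "submatrix (1\<^sub>m n) J UNIV *\<^sub>v x = restrict_vec J n x"
  using submatrix_mult_vec[OF one_carrier_mat, where y = x and J = UNIV and I = J] assms by (simp add: extend_vec_UNIV)

lemma row_selection_carrier_mat: "submatrix (1\<^sub>m n) J UNIV \<in> carrier_mat (card {i. i < n \<and> i \<in> J}) n"
  using submatrix_carrier_mat[OF one_carrier_mat, of n J UNIV] by simp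

lemma row_selection_mult_vec_eq_0_iff:
  fixes x :: "'a :: comm_ring_1 vec"
  assumes "x \<in> carrier_vec n"
  shows "submatrix (1\<^sub>m n) J UNIV *\<^sub>v x = 0\<^sub>v (card {i. i < n \<and> i \<in> J})
    \<longleftrightarrow> (\<forall>t<n. t \<in> J \<longrightarrow> x $ t = 0)"
  unfolding row_selection_mult_vec[OF assms] by (rule restrict_vec_eq_0_iff[OF assms])

lemma mat_kernel_append_rows:
  fixes M B :: "'a :: comm_ring_1 mat"
  assumes M: "M \<in> carrier_mat nr nc" and B: "B \<in> carrier_mat k nc"
  shows "mat_kernel (M @\<^sub>r B) = {x \<in> mat_kernel M. B *\<^sub>v x = 0\<^sub>v k}"
proof -
  have "(M *\<^sub>v x) @\<^sub>v (B *\<^sub>v x) = 0\<^sub>v nr @\<^sub>v 0\<^sub>v k \<longleftrightarrow> M *\<^sub>v x = 0\<^sub>v nr \<and> B *\<^sub>v x = 0\<^sub>v k"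
    if "x \<in> carrier_vec nc" for x
    using append_vec_eq[OF mult_mat_vec_carrier[OF M that] zero_carrier_vec] by simp
  moreover have "0\<^sub>v nr @\<^sub>v 0\<^sub>v k = (0\<^sub>v (nr + k) :: 'a vec)" by auto
  ultimately show ?thesis
    using M B by (auto simp: mat_kernel[OF carrier_append_rows[OF M B]] mat_kernel[OF M] mat_mult_append)
qed

lemma dim_subspace_vec:
  fixes X :: "'a :: field vec set"
  assumes X: "subspace class_ring X (module_vec TYPE('a) k)"
  shows "vectorspace.dim class_ring ((module_vec TYPE('a) k)\<lparr>carrier := X\<rparr>) \<le> k"
    and "vectorspace.dim class_ring ((module_vec TYPE('a) k)\<lparr>carrier := X\<rparr>) = k \<Longrightarrow> X = carrier_vec k"
proof -
  interpret V: vec_space "TYPE('a)" k .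
  interpret VX: vectorspace class_ring "V.vs X" using V.subspace_is_vs[OF X] .
  have sm: "submodule class_ring X V.V" using X unfolding subspace_def by auto
  have Xc: "X \<subseteq> carrier_vec k" using sm unfolding submodule_def by auto
  have li: "V.lin_indpt S" if "S \<subseteq> X" "VX.lin_indpt S" for S
    using V.span_li_not_depend(2)[OF that(1) sm] that(2) by simp
  have bnd: "finite S \<and> card S \<le> k" if "S \<subseteq> carrier (V.vs X) \<and> VX.lin_indpt S" for S
  proof -
    have "S \<subseteq> X" "V.lin_indpt S" using that li by auto
    with V.li_le_dim[OF V.fin_dim, of S] Xc show ?thesis by (auto simp: V.dim_is_n)
  qed
  obtain S where S: "finite S" "maximal S (\<lambda>S. S \<subseteq> carrier (V.vs X) \<and> VX.lin_indpt S)"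
    using maximal_exists[of "\<lambda>S. S \<subseteq> carrier (V.vs X) \<and> VX.lin_indpt S" k "{}", OF bnd]
    unfolding VX.lin_dep_def by auto
  have "VX.fin_dim"
    using S VX.max_li_is_gen[OF S(2)] unfolding VX.fin_dim_def maximal_def by auto
  then obtain b where b: "finite b" "VX.basis b" using VX.finite_basis_exists by auto
  have bX: "b \<subseteq> X" "VX.lin_indpt b" using b(2) unfolding VX.basis_def by auto
  show "VX.dim \<le> k" using bnd[of b] bX VX.dim_basis[OF b] by simp
  assume "VX.dim = k"
  then have "V.basis b"
    using VX.dim_basis[OF b] bX Xc li
    by (intro V.dim_li_is_basis[OF V.fin_dim b(1)]) (auto simp: V.dim_is_n)
  then have "V.span b = carrier_vec k" unfolding V.basis_def by auto
  moreover have "V.span b \<subseteq> X" using V.span_is_subset[OF bX(1) sm] .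
  ultimately show "X = carrier_vec k" using Xc by auto
qed

lemma kernel_dim_append_rows:
  fixes M B :: "'a :: field mat"
  assumes M: "M \<in> carrier_mat nr nc" and B: "B \<in> carrier_mat k nc"
  shows "kernel_dim M = kernel_dim (M @\<^sub>r B)
    + vectorspace.dim class_ring ((module_vec TYPE('a) k)\<lparr>carrier := (\<lambda>x. B *\<^sub>v x) ` mat_kernel M\<rparr>)"
    and "subspace class_ring ((\<lambda>x. B *\<^sub>v x) ` mat_kernel M) (module_vec TYPE('a) k)"
proof -
  interpret KM: kernel nr nc M by (unfold_locales, rule M)
  interpret KC: kernel "nr + k" nc "M @\<^sub>r B" by (unfold_locales, rule carrier_append_rows[OF M B])
  interpret W: vec_space "TYPE('a)" k .
  have "(\<lambda>x. B *\<^sub>v x) \<in> LinearCombinations.module_hom class_ring KM.VK W.V"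
    using M B mat_kernel_carrier[OF M]
    by (auto simp: module_hom_def mult_mat_vec intro!: mult_add_distrib_mat_vec[OF B])
  then interpret L: linear_map class_ring KM.VK W.V "\<lambda>x. B *\<^sub>v x"
    using KM.Ker.vectorspace_axioms W.vectorspace_axioms
    by (simp add: linear_map_def mod_hom_def mod_hom_axioms_def vectorspace_def)
  obtain bs where "finite bs" "KM.basis bs" using kernel_basis_exists[OF M] by auto
  then have "KM.Ker.fin_dim" unfolding KM.Ker.fin_dim_def KM.Ker.basis_def by auto
  note rank_nullity = L.rank_nullity[OF this]
  have "L.kerT = mat_kernel (M @\<^sub>r B)"
    unfolding L.ker_def mat_kernel_append_rows[OF M B] by auto
  moreover have "L.imT = (\<lambda>x. B *\<^sub>v x) ` mat_kernel M" unfolding L.im_def by auto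
  ultimately show "kernel_dim M = kernel_dim (M @\<^sub>r B)
    + vectorspace.dim class_ring ((module_vec TYPE('a) k)\<lparr>carrier := (\<lambda>x. B *\<^sub>v x) ` mat_kernel M\<rparr>)"
    using rank_nullity by simp
  show "subspace class_ring ((\<lambda>x. B *\<^sub>v x) ` mat_kernel M) (module_vec TYPE('a) k)"
    using L.imT_is_subspace unfolding L.im_def by simp
qed

lemma kernel_dim_append_rows_le:
  fixes M B :: "'a :: field mat"
  assumes "M \<in> carrier_mat nr nc" "B \<in> carrier_mat k nc"
  shows "kernel_dim M \<le> kernel_dim (M @\<^sub>r B) + k"
  using kernel_dim_append_rows[OF assms] dim_subspace_vec(1) by fastforce

lemma kernel_dim_append_rows_eq_iff:
  fixes M B :: "'a :: field mat"
  assumes M: "M \<in> carrier_mat nr nc" and B: "B \<in> carrier_mat k nc"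
  shows "kernel_dim M = kernel_dim (M @\<^sub>r B) + k \<longleftrightarrow> (\<lambda>x. B *\<^sub>v x) ` mat_kernel M = carrier_vec k"
proof
  assume "kernel_dim M = kernel_dim (M @\<^sub>r B) + k"
  then show "(\<lambda>x. B *\<^sub>v x) ` mat_kernel M = carrier_vec k"
    using kernel_dim_append_rows[OF M B] dim_subspace_vec(2) by (metis add_left_cancel)
next
  interpret W: vec_space "TYPE('a)" k .
  have V: "(module_vec TYPE('a) k)\<lparr>carrier := carrier_vec k\<rparr> = module_vec TYPE('a) k"
    by (rule partial_object.equality) (simp_all add: module_vec_simps)
  assume img: "(\<lambda>x. B *\<^sub>v x) ` mat_kernel M = carrier_vec k"
  show "kernel_dim M = kernel_dim (M @\<^sub>r B) + k"
    using kernel_dim_append_rows(1)[OF M B] W.dim_is_n unfolding img V by simp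
qed

lemma kernel_dim_eqI:
  assumes "mat_kernel A = mat_kernel B" "dim_col A = dim_col B"
  shows "kernel_dim A = kernel_dim B"
  using assms unfolding kernel_dim_def by simp

lemma kernel_dim_eq_0:
  fixes A :: "'a :: field mat"
  assumes "A \<in> carrier_mat nr nc" "mat_kernel A = {0\<^sub>v nc}"
  shows "kernel_dim A = 0"
proof -
  have "mat_kernel (1\<^sub>m nc :: 'a mat) = {0\<^sub>v nc}"
    unfolding mat_kernel[OF one_carrier_mat] by auto
  then have "kernel_dim A = kernel_dim (1\<^sub>m nc :: 'a mat)"
    using assms by (intro kernel_dim_eqI) auto
  then show ?thesis using kernel_one_mat(1)[of nc] unfolding kernel_dim_def by simp
qed

lemma mat_kernel_submatrix_cols:
  fixes M :: "'a :: comm_ring_1 mat"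
  assumes M: "M \<in> carrier_mat nr n"
  shows "mat_kernel (submatrix M UNIV J)
    = restrict_vec J n ` {x \<in> mat_kernel M. \<forall>t<n. t \<notin> J \<longrightarrow> x $ t = 0}"
proof -
  let ?m = "card {j. j < n \<and> j \<in> J}"
  have S: "submatrix M UNIV J \<in> carrier_mat nr ?m"
    using submatrix_carrier_mat[OF M, of UNIV J] by simp
  have SM: "submatrix M UNIV J *\<^sub>v y = M *\<^sub>v extend_vec J n y" if "y \<in> carrier_vec ?m" for y
    using submatrix_mult_vec[OF M that, of UNIV] M by (simp add: restrict_vec_UNIV)
  show ?thesis
  proof (intro equalityI subsetI)
    fix y assume y: "y \<in> mat_kernel (submatrix M UNIV J)"
    have yc: "y \<in> carrier_vec ?m" using mat_kernelD(1)[OF S y] .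
    have "M *\<^sub>v extend_vec J n y = 0\<^sub>v nr" using mat_kernelD(2)[OF S y] SM[OF yc] by simp
    then have "extend_vec J n y \<in> mat_kernel M" by (rule mat_kernelI[OF M extend_vec_carrier])
    moreover have "\<forall>t<n. t \<notin> J \<longrightarrow> extend_vec J n y $ t = 0" by (simp add: extend_vec_index)
    ultimately have "extend_vec J n y \<in> {x \<in> mat_kernel M. \<forall>t<n. t \<notin> J \<longrightarrow> x $ t = 0}" by simp
    then have "restrict_vec J n (extend_vec J n y)
        \<in> restrict_vec J n ` {x \<in> mat_kernel M. \<forall>t<n. t \<notin> J \<longrightarrow> x $ t = 0}"
      by (rule imageI)
    then show "y \<in> restrict_vec J n ` {x \<in> mat_kernel M. \<forall>t<n. t \<notin> J \<longrightarrow> x $ t = 0}"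
      unfolding restrict_extend_vec[OF yc] .
  next
    fix y assume "y \<in> restrict_vec J n ` {x \<in> mat_kernel M. \<forall>t<n. t \<notin> J \<longrightarrow> x $ t = 0}"
    then obtain x where x: "x \<in> mat_kernel M" "\<forall>t<n. t \<notin> J \<longrightarrow> x $ t = 0"
      and y: "y = restrict_vec J n x" by auto
    have "extend_vec J n y = x"
      using extend_restrict_vec[OF mat_kernelD(1)[OF M x(1)]] x(2) y by auto
    then show "y \<in> mat_kernel (submatrix M UNIV J)"
      using mat_kernelD(2)[OF M x(1)] SM y by (auto intro!: mat_kernelI[OF S])
  qed
qed

text \<open>Appending the rows of the identity indexed by \<open>-J\<close> cuts the kernel of \<open>M\<close> down to
  the vectors vanishing outside \<open>J\<close>.\<close>
lemma kernel_dim_submatrix_cols: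
  fixes M :: "'a :: field mat"
  assumes M: "M \<in> carrier_mat nr n"
  shows "kernel_dim (submatrix M UNIV J) = kernel_dim (M @\<^sub>r submatrix (1\<^sub>m n) (-J) UNIV)"
proof -
  let ?m = "card {j. j < n \<and> j \<in> J}"
  define D where "D = M @\<^sub>r submatrix (1\<^sub>m n) (-J) UNIV"
  define R :: "'a mat" where "R = submatrix (1\<^sub>m n) J UNIV"
  note sel = row_selection_carrier_mat[where 'a = 'a]
  have D: "D \<in> carrier_mat (nr + card {i. i < n \<and> i \<in> -J}) n"
    unfolding D_def by (rule carrier_append_rows[OF M sel])
  have R: "R \<in> carrier_mat ?m n" unfolding R_def by (rule sel)
  have kerD: "mat_kernel D = {x \<in> mat_kernel M. \<forall>t<n. t \<notin> J \<longrightarrow> x $ t = 0}"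
  proof -
    have "submatrix (1\<^sub>m n) (-J) UNIV *\<^sub>v x = 0\<^sub>v (card {i. i < n \<and> i \<in> -J})
        \<longleftrightarrow> (\<forall>t<n. t \<notin> J \<longrightarrow> x $ t = 0)" if "x \<in> mat_kernel M" for x
      using row_selection_mult_vec_eq_0_iff[OF mat_kernelD(1)[OF M that], of "-J"] by simp
    then show ?thesis unfolding D_def mat_kernel_append_rows[OF M sel] by blast
  qed
  have "mat_kernel (D @\<^sub>r R) = {0\<^sub>v n}"
  proof -
    have "x = 0\<^sub>v n" if "x \<in> mat_kernel D" "R *\<^sub>v x = 0\<^sub>v ?m" for x
      using that mat_kernel_carrier[OF D] row_selection_mult_vec_eq_0_iff[of x n J]
      unfolding kerD R_def by (intro eq_vecI) auto
    moreover have "0\<^sub>v n \<in> mat_kernel D"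
      by (rule mat_kernelI[OF D]) (use D in \<open>auto intro!: eq_vecI\<close>)
    ultimately show ?thesis unfolding mat_kernel_append_rows[OF D R] using R by auto
  qed
  then have "kernel_dim (D @\<^sub>r R) = 0" using kernel_dim_eq_0 D R by blast
  then have kernel_D: "kernel_dim D = vectorspace.dim class_ring
      ((module_vec TYPE('a) ?m)\<lparr>carrier := (\<lambda>x. R *\<^sub>v x) ` mat_kernel D\<rparr>)"
    using kernel_dim_append_rows(1)[OF D R] by linarith
  have "R *\<^sub>v x = restrict_vec J n x" if "x \<in> mat_kernel D" for x
    unfolding R_def by (rule row_selection_mult_vec[OF mat_kernelD(1)[OF D that]])
  then have image_R: "(\<lambda>x. R *\<^sub>v x) ` mat_kernel D = mat_kernel (submatrix M UNIV J)"
    unfolding mat_kernel_submatrix_cols[OF M] kerD[symmetric] by (rule image_cong[OF refl])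
  have kernel_sub: "kernel_dim (submatrix M UNIV J)
      = vectorspace.dim class_ring ((module_vec TYPE('a) ?m)\<lparr>carrier := mat_kernel (submatrix M UNIV J)\<rparr>)"
    unfolding kernel_dim_def using M by (simp add: dim_submatrix)
  have "kernel_dim (submatrix M UNIV J) = kernel_dim D"
    unfolding kernel_sub kernel_D image_R by (rule refl)
  then show ?thesis unfolding D_def .
qed

lemma mat_kernel_submatrix_rows_split:
  fixes M :: "'a :: comm_ring_1 mat"
  assumes M: "M \<in> carrier_mat nr nc"
  shows "mat_kernel (submatrix M (-I) J @\<^sub>r submatrix M I J) = mat_kernel (submatrix M UNIV J)"
proof -
  let ?m = "card {j. j < nc \<and> j \<in> J}"
  have S: "submatrix M UNIV J \<in> carrier_mat nr ?m"
    using submatrix_carrier_mat[OF M, of UNIV J] by simp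
  have "submatrix M (-I) J *\<^sub>v y = 0\<^sub>v (card {i. i < nr \<and> i \<in> -I}) \<and>
      submatrix M I J *\<^sub>v y = 0\<^sub>v (card {i. i < nr \<and> i \<in> I}) \<longleftrightarrow>
      submatrix M UNIV J *\<^sub>v y = 0\<^sub>v nr" if y: "y \<in> carrier_vec ?m" for y
  proof -
    have w: "M *\<^sub>v extend_vec J nc y \<in> carrier_vec nr" using M by simp
    show ?thesis
      unfolding submatrix_mult_vec[OF M y] restrict_vec_eq_0_iff[OF w] restrict_vec_UNIV[OF w]
      using w M by (auto simp: vec_eq_iff)
  qed
  then show ?thesis
    unfolding mat_kernel_append_rows[OF submatrix_carrier_mat[OF M] submatrix_carrier_mat[OF M]]
      mat_kernel[OF S] mat_kernel[OF submatrix_carrier_mat[OF M, of "-I" J]]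
    by auto
qed

lemma kernel_dim_submatrix_rows_split:
  fixes M :: "'a :: field mat"
  assumes M: "M \<in> carrier_mat nr n"
  shows "kernel_dim (submatrix M (-I) J @\<^sub>r submatrix M I J)
    = kernel_dim (M @\<^sub>r submatrix (1\<^sub>m n) (-J) UNIV)"
proof -
  have "dim_col (submatrix M (-I) J @\<^sub>r submatrix M I J) = dim_col (submatrix M UNIV J)"
    using carrier_append_rows[OF submatrix_carrier_mat[OF M, of "-I" J] submatrix_carrier_mat[OF M, of I J]] M
    by (simp add: dim_submatrix)
  then have "kernel_dim (submatrix M (-I) J @\<^sub>r submatrix M I J) = kernel_dim (submatrix M UNIV J)"
    by (rule kernel_dim_eqI[OF mat_kernel_submatrix_rows_split[OF M]])
  also have "\<dots> = kernel_dim (M @\<^sub>r submatrix (1\<^sub>m n) (-J) UNIV)"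
    by (rule kernel_dim_submatrix_cols[OF M])
  finally show ?thesis .
qed

lemma P_vertex_kernel_vanishes:
  assumes A: "A \<in> carrier_mat n n" and P: "P_vertex A i" and x: "x \<in> mat_kernel A"
  shows "x $ i = 0"
proof (rule ccontr)
  assume xi: "x $ i \<noteq> 0"
  have i: "i < n" using P A unfolding P_vertex_def by auto
  have one: "card {a. a < n \<and> a \<in> {i}} = 1" using card_bounded_eq[of "{i}" n] i by simp
  define E :: "real mat" where "E = submatrix (1\<^sub>m n) {i} UNIV"
  have E: "E \<in> carrier_mat 1 n"
    using submatrix_carrier_mat[OF one_carrier_mat, of n "{i}" UNIV] one unfolding E_def by simp
  have Ey: "(E *\<^sub>v y) $ 0 = y $ i" if "y \<in> carrier_vec n" for y
  proof -
    have "pick {i} 0 = i" unfolding pick.simps by (rule Least_equality) auto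
    then show ?thesis using that one unfolding E_def by (simp add: row_selection_mult_vec restrict_vec_index)
  qed
  have "(\<lambda>y. E *\<^sub>v y) ` mat_kernel A = carrier_vec 1"
  proof (intro equalityI subsetI)
    fix v :: "real vec" assume v: "v \<in> carrier_vec 1"
    let ?y = "(v $ 0 / x $ i) \<cdot>\<^sub>v x"
    have "?y \<in> mat_kernel A" by (rule mat_kernel_smult[OF A x])
    then have "E *\<^sub>v ?y \<in> (\<lambda>y. E *\<^sub>v y) ` mat_kernel A" by (rule imageI)
    moreover have "E *\<^sub>v ?y = v"
      using Ey[of ?y] mat_kernelD(1)[OF A x] xi v E i by (intro eq_vecI) auto
    ultimately show "v \<in> (\<lambda>y. E *\<^sub>v y) ` mat_kernel A" by simp
  qed (use E mat_kernel_carrier[OF A] in auto)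
  then have "kernel_dim A = kernel_dim (A @\<^sub>r E) + 1"
    using kernel_dim_append_rows_eq_iff[OF A E] by simp
  moreover have "kernel_dim (del_princ A {i})
      \<le> kernel_dim (del_princ A {i} @\<^sub>r submatrix A {i} (-{i})) + 1"
    using kernel_dim_append_rows_le[OF submatrix_carrier_mat[OF A]
        submatrix_carrier_mat[OF A, of "{i}" "-{i}", unfolded one]]
    unfolding del_princ_def .
  moreover have "kernel_dim (del_princ A {i} @\<^sub>r submatrix A {i} (-{i})) = kernel_dim (A @\<^sub>r E)"
    using kernel_dim_submatrix_rows_split[OF A, of "{i}" "-{i}"]
    unfolding del_princ_def E_def double_complement .
  ultimately show False using P unfolding P_vertex_def nullity_def by linarith
qed

lemma border_solution_iff:
  fixes M :: "'a :: comm_ring_1 mat"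
  assumes M: "M \<in> carrier_mat n n" and y: "y \<in> carrier_vec (card {j. j < n \<and> j \<in> -\<alpha>})"
    and v: "v \<in> carrier_vec (card {i. i < n \<and> i \<in> \<alpha>})"
  shows "y \<in> mat_kernel (submatrix M (-\<alpha>) (-\<alpha>)) \<and> submatrix M \<alpha> (-\<alpha>) *\<^sub>v y = v \<longleftrightarrow>
    M *\<^sub>v extend_vec (-\<alpha>) n y = extend_vec \<alpha> n v"
proof -
  have w: "M *\<^sub>v extend_vec (-\<alpha>) n y \<in> carrier_vec n" using M by simp
  have "y \<in> mat_kernel (submatrix M (-\<alpha>) (-\<alpha>)) \<longleftrightarrow>
      restrict_vec (-\<alpha>) n (M *\<^sub>v extend_vec (-\<alpha>) n y) = 0\<^sub>v (card {j. j < n \<and> j \<in> -\<alpha>})"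
    using y submatrix_carrier_mat[OF M, of "-\<alpha>" "-\<alpha>"]
    by (simp add: mat_kernel submatrix_mult_vec[OF M y])
  then show ?thesis
    unfolding extend_vec_eq_iff[OF w v] submatrix_mult_vec[OF M y] by blast
qed

lemma kernel_dim_border:
  fixes M :: "'a :: field mat"
  assumes M: "M \<in> carrier_mat n n" and van: "\<forall>x\<in>mat_kernel M. \<forall>i\<in>\<alpha>. x $ i = 0"
  shows "kernel_dim (submatrix M (-\<alpha>) (-\<alpha>) @\<^sub>r submatrix M \<alpha> (-\<alpha>)) = kernel_dim M"
proof -
  have "mat_kernel (M @\<^sub>r submatrix (1\<^sub>m n) \<alpha> UNIV) = mat_kernel M"
    unfolding mat_kernel_append_rows[OF M row_selection_carrier_mat]
    using van row_selection_mult_vec_eq_0_iff[OF mat_kernelD(1)[OF M], of _ \<alpha>] by blast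
  moreover have "dim_col (M @\<^sub>r submatrix (1\<^sub>m n) \<alpha> UNIV) = dim_col M"
    using carrier_matD(2)[OF carrier_append_rows[OF M row_selection_carrier_mat[of n \<alpha>]]] M by simp
  ultimately have "kernel_dim (M @\<^sub>r submatrix (1\<^sub>m n) \<alpha> UNIV) = kernel_dim M"
    by (rule kernel_dim_eqI)
  with kernel_dim_submatrix_rows_split[OF M, of \<alpha> "-\<alpha>"] show ?thesis
    unfolding double_complement by (rule trans)
qed

lemma ex_border_solution_iff:
  fixes M :: "'a :: comm_ring_1 mat"
  assumes M: "M \<in> carrier_mat n n" and \<alpha>: "\<alpha> \<subseteq> {..<n}" and v: "v \<in> carrier_vec (card \<alpha>)"
  shows "(\<exists>y\<in>mat_kernel (submatrix M (-\<alpha>) (-\<alpha>)). submatrix M \<alpha> (-\<alpha>) *\<^sub>v y = v) \<longleftrightarrow>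
    (\<exists>x\<in>carrier_vec n. (\<forall>i\<in>\<alpha>. x $ i = 0) \<and> M *\<^sub>v x = extend_vec \<alpha> n v)"
proof
  have v': "v \<in> carrier_vec (card {i. i < n \<and> i \<in> \<alpha>})" using v card_bounded_eq[OF \<alpha>] by simp
  {
    assume "\<exists>y\<in>mat_kernel (submatrix M (-\<alpha>) (-\<alpha>)). submatrix M \<alpha> (-\<alpha>) *\<^sub>v y = v"
    then obtain y where y: "y \<in> mat_kernel (submatrix M (-\<alpha>) (-\<alpha>))" "submatrix M \<alpha> (-\<alpha>) *\<^sub>v y = v"
      by blast
    have yc: "y \<in> carrier_vec (card {j. j < n \<and> j \<in> -\<alpha>})"
      using mat_kernelD(1)[OF submatrix_carrier_mat[OF M] y(1)] .
    show "\<exists>x\<in>carrier_vec n. (\<forall>i\<in>\<alpha>. x $ i = 0) \<and> M *\<^sub>v x = extend_vec \<alpha> n v"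
      using border_solution_iff[OF M yc v'] y \<alpha>
      by (intro bexI[of _ "extend_vec (-\<alpha>) n y"]) (auto simp: extend_vec_index)
  next
    assume "\<exists>x\<in>carrier_vec n. (\<forall>i\<in>\<alpha>. x $ i = 0) \<and> M *\<^sub>v x = extend_vec \<alpha> n v"
    then obtain x where x: "x \<in> carrier_vec n" "\<forall>i\<in>\<alpha>. x $ i = 0" "M *\<^sub>v x = extend_vec \<alpha> n v"
      by blast
    have "extend_vec (-\<alpha>) n (restrict_vec (-\<alpha>) n x) = x"
      by (rule extend_restrict_vec[OF x(1)]) (use x(2) in auto)
    then have "restrict_vec (-\<alpha>) n x \<in> mat_kernel (submatrix M (-\<alpha>) (-\<alpha>))
        \<and> submatrix M \<alpha> (-\<alpha>) *\<^sub>v restrict_vec (-\<alpha>) n x = v"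
      using border_solution_iff[OF M restrict_vec_carrier v', of x] x(3) by simp
    then show "\<exists>y\<in>mat_kernel (submatrix M (-\<alpha>) (-\<alpha>)). submatrix M \<alpha> (-\<alpha>) *\<^sub>v y = v"
      by blast
  }
qed

lemma P_set_iff_solvable:
  fixes M :: "real mat"
  assumes M: "M \<in> carrier_mat n n" and \<alpha>: "\<alpha> \<subseteq> {..<n}"
    and van: "\<forall>x\<in>mat_kernel M. \<forall>i\<in>\<alpha>. x $ i = 0"
  shows "P_set M \<alpha> \<longleftrightarrow> (\<forall>v\<in>carrier_vec (card \<alpha>).
    \<exists>x\<in>carrier_vec n. (\<forall>i\<in>\<alpha>. x $ i = 0) \<and> M *\<^sub>v x = extend_vec \<alpha> n v)"
proof -
  let ?k = "card \<alpha>" and ?m = "card {j. j < n \<and> j \<in> -\<alpha>}"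
  define N where "N = submatrix M (-\<alpha>) (-\<alpha>)"
  define B where "B = submatrix M \<alpha> (-\<alpha>)"
  have N: "N \<in> carrier_mat ?m ?m" unfolding N_def by (rule submatrix_carrier_mat[OF M])
  have B: "B \<in> carrier_mat ?k ?m"
    using submatrix_carrier_mat[OF M, of \<alpha> "-\<alpha>"] unfolding B_def card_bounded_eq[OF \<alpha>] .
  have "P_set M \<alpha> \<longleftrightarrow> (\<lambda>y. B *\<^sub>v y) ` mat_kernel N = carrier_vec ?k"
    using kernel_dim_append_rows_eq_iff[OF N B] kernel_dim_border[OF M van] \<alpha> M
    unfolding P_set_def nullity_def del_princ_def N_def B_def by simp
  also have "\<dots> \<longleftrightarrow> (\<forall>v\<in>carrier_vec ?k. \<exists>y\<in>mat_kernel N. B *\<^sub>v y = v)"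
  proof
    assume "(\<lambda>y. B *\<^sub>v y) ` mat_kernel N = carrier_vec ?k"
    then show "\<forall>v\<in>carrier_vec ?k. \<exists>y\<in>mat_kernel N. B *\<^sub>v y = v" by (metis imageE)
  next
    assume "\<forall>v\<in>carrier_vec ?k. \<exists>y\<in>mat_kernel N. B *\<^sub>v y = v"
    then show "(\<lambda>y. B *\<^sub>v y) ` mat_kernel N = carrier_vec ?k"
      using mat_kernel_carrier[OF N] B by force
  qed
  also have "\<dots> \<longleftrightarrow> (\<forall>v\<in>carrier_vec ?k.
      \<exists>x\<in>carrier_vec n. (\<forall>i\<in>\<alpha>. x $ i = 0) \<and> M *\<^sub>v x = extend_vec \<alpha> n v)"
    unfolding N_def B_def by (intro ball_cong refl) (rule ex_border_solution_iff[OF M \<alpha>])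
  finally show ?thesis .
qed

lemma rows_basis_row_lincomb:
  fixes A :: "real mat"
  assumes A: "A \<in> carrier_mat nr nc" and rb: "rows_basis A \<beta>" and j: "j < nr"
  shows "\<exists>c. \<forall>k<nc. A $$ (j, k) = (\<Sum>b\<in>\<beta>. c b * A $$ (b, k))"
proof -
  interpret V: vec_space "TYPE(real)" nc .
  have bn: "\<beta> \<subseteq> {..<nr}" and inj: "inj_on (row A) \<beta>"
    and sp: "V.span (row A ` \<beta>) = V.row_space A" using rb A unfolding rows_basis_def by auto
  have fin: "finite \<beta>" using bn finite_subset by blast
  have rc: "row A ` \<beta> \<subseteq> carrier_vec nc" using bn A by auto
  have "row A j \<in> set (rows A)" using j A unfolding rows_def by auto
  moreover have "set (rows A) \<subseteq> carrier_vec nc" using A set_rows_carrier by blast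
  ultimately have "row A j \<in> V.span (row A ` \<beta>)"
    unfolding sp V.row_space_def using V.in_own_span by auto
  then obtain a S where S: "row A j = V.lincomb a S" "finite S" "S \<subseteq> row A ` \<beta>"
    using V.in_spanE by blast
  define c where "c b = (if row A b \<in> S then a (row A b) else 0)" for b
  have "A $$ (j, k) = (\<Sum>b\<in>\<beta>. c b * A $$ (b, k))" if k: "k < nc" for k
  proof -
    have "A $$ (j, k) = row A j $ k" using A j k by simp
    also have "\<dots> = (\<Sum>x\<in>S. a x * x $ k)"
      unfolding S(1) by (rule V.lincomb_index[OF k]) (use S rc in auto)
    also have "\<dots> = (\<Sum>x\<in>row A ` \<beta>. if x \<in> S then a x * x $ k else 0)"
      using fin S(3) by (simp add: sum.inter_restrict[symmetric] Int_absorb1)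
    also have "\<dots> = (\<Sum>b\<in>\<beta>. if row A b \<in> S then a (row A b) * row A b $ k else 0)"
      by (rule sum.reindex[OF inj, unfolded comp_def])
    also have "\<dots> = (\<Sum>b\<in>\<beta>. c b * A $$ (b, k))"
      using bn k A unfolding c_def by (intro sum.cong) auto
    finally show ?thesis .
  qed
  then show ?thesis by blast
qed

lemma mult_mat_vec_index_sum:
  assumes "A \<in> carrier_mat nr nc" "x \<in> carrier_vec nc" "i < nr"
  shows "(A *\<^sub>v x) $ i = (\<Sum>k<nc. A $$ (i, k) * x $ k)"
  using assms by (auto simp: scalar_prod_def lessThan_atLeast0 intro!: sum.cong)

lemma mult_mat_vec_row_lincomb:
  fixes A :: "'a :: comm_ring_1 mat"
  assumes A: "A \<in> carrier_mat nr nc" and x: "x \<in> carrier_vec nc" and j: "j < nr"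
    and \<beta>: "\<beta> \<subseteq> {..<nr}"
    and c: "\<forall>k<nc. A $$ (j, k) = (\<Sum>b\<in>\<beta>. c b * A $$ (b, k))"
  shows "(A *\<^sub>v x) $ j = (\<Sum>b\<in>\<beta>. c b * (A *\<^sub>v x) $ b)"
proof -
  have "(A *\<^sub>v x) $ j = (\<Sum>k<nc. \<Sum>b\<in>\<beta>. c b * A $$ (b, k) * x $ k)"
    using mult_mat_vec_index_sum[OF A x j] c by (simp add: sum_distrib_right)
  also have "\<dots> = (\<Sum>b\<in>\<beta>. c b * (\<Sum>k<nc. A $$ (b, k) * x $ k))"
    by (subst sum.swap) (simp add: mult.assoc sum_distrib_left)
  also have "\<dots> = (\<Sum>b\<in>\<beta>. c b * (A *\<^sub>v x) $ b)"
  proof (rule sum.cong[OF refl])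
    fix b assume "b \<in> \<beta>"
    then have "(A *\<^sub>v x) $ b = (\<Sum>k<nc. A $$ (b, k) * x $ k)"
      using mult_mat_vec_index_sum[OF A x] \<beta> by blast
    then show "c b * (\<Sum>k<nc. A $$ (b, k) * x $ k) = c b * (A *\<^sub>v x) $ b" by (simp only:)
  qed
  finally show ?thesis .
qed

lemma symmetric_mat_index:
  assumes "A \<in> carrier_mat n n" "A\<^sup>T = A" "i < n" "j < n"
  shows "A $$ (i, j) = A $$ (j, i)"
  using assms by (metis index_transpose_mat(1) carrier_matD)

text \<open>For symmetric \<open>A\<close> the product \<open>A x\<close> of a vector supported on \<open>\<beta>\<close> is the
  combination of the rows indexed by \<open>\<beta>\<close> with coefficients \<open>x\<close>; independence of these
  rows leaves only \<open>x = 0\<close>.\<close>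
lemma rows_basis_kernel_supported:
  fixes A :: "real mat"
  assumes A: "A \<in> carrier_mat n n" and sym: "A\<^sup>T = A" and rb: "rows_basis A \<beta>"
    and x: "x \<in> mat_kernel A" and supp: "\<forall>t<n. t \<notin> \<beta> \<longrightarrow> x $ t = 0" and b: "b \<in> \<beta>"
  shows "x $ b = 0"
proof (rule ccontr)
  assume xb: "x $ b \<noteq> 0"
  interpret V: vec_space "TYPE(real)" n .
  have bn: "\<beta> \<subseteq> {..<n}" and inj: "inj_on (row A) \<beta>"
    and li: "V.lin_indpt (row A ` \<beta>)" using rb A unfolding rows_basis_def by auto
  have fin: "finite \<beta>" using bn finite_subset by blast
  have rc: "row A ` \<beta> \<subseteq> carrier_vec n" using bn A by auto
  have xc: "x \<in> carrier_vec n" and Ax: "A *\<^sub>v x = 0\<^sub>v n" using mat_kernelD[OF A x] by auto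
  define a where "a v = x $ (inv_into \<beta> (row A) v)" for v
  have av: "a (row A b) = x $ b" if "b \<in> \<beta>" for b
    unfolding a_def using inv_into_f_f[OF inj that] by simp
  have "V.lincomb a (row A ` \<beta>) = 0\<^sub>v n"
  proof (rule eq_vecI)
    fix k assume "k < dim_vec (0\<^sub>v n :: real vec)"
    then have k: "k < n" by simp
    have "V.lincomb a (row A ` \<beta>) $ k = (\<Sum>b\<in>\<beta>. a (row A b) * row A b $ k)"
      using V.lincomb_index[OF k rc] sum.reindex[OF inj] by simp
    also have "\<dots> = (\<Sum>b\<in>\<beta>. A $$ (k, b) * x $ b)"
      using bn k A av symmetric_mat_index[OF A sym] by (intro sum.cong) auto
    also have "\<dots> = (\<Sum>t<n. A $$ (k, t) * x $ t)"
      using bn supp by (intro sum.mono_neutral_left) auto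
    also have "\<dots> = (A *\<^sub>v x) $ k" by (rule mult_mat_vec_index_sum[OF A xc k, symmetric])
    finally show "V.lincomb a (row A ` \<beta>) $ k = 0\<^sub>v n $ k" using Ax k by simp
  qed (use V.lincomb_dim[OF _ rc] fin in simp)
  then have "V.lin_dep (row A ` \<beta>)"
    unfolding V.lin_dep_def using fin b xb av
    by (intro exI[of _ "row A ` \<beta>"] exI[of _ a] exI[of _ "row A b"]) auto
  then show False using li by simp
qed

text \<open>By symmetry, \<open>e\<^sub>j - c\<close> lies in the kernel when row \<open>j \<notin> \<beta>\<close> equals
  \<open>\<Sum>b\<in>\<beta>. c b \<cdot> row b\<close>; so \<open>c\<close> vanishes wherever all kernel vectors do.\<close>
lemma rows_basis_row_lincomb_vanishing:
  fixes A :: "real mat"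
  assumes A: "A \<in> carrier_mat n n" and sym: "A\<^sup>T = A" and rb: "rows_basis A \<beta>"
    and j: "j < n" "j \<notin> \<beta>" and \<alpha>: "\<alpha> \<subseteq> \<beta>"
    and van: "\<forall>x\<in>mat_kernel A. \<forall>i\<in>\<alpha>. x $ i = 0"
  shows "\<exists>c. (\<forall>k<n. A $$ (j, k) = (\<Sum>b\<in>\<beta>. c b * A $$ (b, k))) \<and> (\<forall>i\<in>\<alpha>. c i = 0)"
proof -
  obtain c where c: "\<forall>k<n. A $$ (j, k) = (\<Sum>b\<in>\<beta>. c b * A $$ (b, k))"
    using rows_basis_row_lincomb[OF A rb j(1)] by blast
  have bn: "\<beta> \<subseteq> {..<n}" using rb A unfolding rows_basis_def by auto
  define z where "z = vec n (\<lambda>t. (if t = j then 1 else 0) - (if t \<in> \<beta> then c t else (0::real)))"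
  have zc: "z \<in> carrier_vec n" unfolding z_def by simp
  have "A *\<^sub>v z = 0\<^sub>v n"
  proof (rule eq_vecI)
    fix r assume "r < dim_vec (0\<^sub>v n :: real vec)"
    then have r: "r < n" by simp
    have "(A *\<^sub>v z) $ r = (\<Sum>t<n. A $$ (r, t) * z $ t)" by (rule mult_mat_vec_index_sum[OF A zc r])
    also have "\<dots> = (\<Sum>t<n. if t = j then A $$ (r, t) else 0)
        - (\<Sum>t<n. if t \<in> \<beta> then c t * A $$ (r, t) else 0)"
      unfolding sum_subtractf[symmetric] z_def by (intro sum.cong refl) (auto simp: algebra_simps)
    also have "\<dots> = A $$ (r, j) - (\<Sum>t\<in>\<beta>. c t * A $$ (r, t))"
      using j bn by (simp add: sum.delta sum.inter_restrict[symmetric] Int_absorb1)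
    also have "A $$ (r, j) = (\<Sum>t\<in>\<beta>. c t * A $$ (r, t))"
    proof -
      have "A $$ (r, j) = (\<Sum>t\<in>\<beta>. c t * A $$ (t, r))"
        using symmetric_mat_index[OF A sym r j(1)] c r by simp
      also have "\<dots> = (\<Sum>t\<in>\<beta>. c t * A $$ (r, t))"
        using bn r by (intro sum.cong refl) (simp add: symmetric_mat_index[OF A sym, of _ r] subset_iff)
      finally show ?thesis .
    qed
    finally show "(A *\<^sub>v z) $ r = 0\<^sub>v n $ r" using r by simp
  qed (use A in simp)
  then have z: "z \<in> mat_kernel A" by (rule mat_kernelI[OF A zc])
  have "c i = 0" if "i \<in> \<alpha>" for i
  proof -
    have "i \<in> \<beta>" "i < n" "i \<noteq> j" using that \<alpha> bn j by auto
    then have "z $ i = - c i" unfolding z_def by simp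
    moreover have "z $ i = 0" using van z that by blast
    ultimately show ?thesis by simp
  qed
  then show ?thesis using c by blast
qed

lemma rows_basis_mult_vec_eq_0:
  fixes A :: "real mat"
  assumes A: "A \<in> carrier_mat n n" and sym: "A\<^sup>T = A" and rb: "rows_basis A \<beta>"
    and \<alpha>: "\<alpha> \<subseteq> \<beta>" and van: "\<forall>x\<in>mat_kernel A. \<forall>i\<in>\<alpha>. x $ i = 0"
    and x: "x \<in> carrier_vec n" and zero: "\<forall>b\<in>\<beta> - \<alpha>. (A *\<^sub>v x) $ b = 0"
    and j: "j < n" "j \<notin> \<alpha>"
  shows "(A *\<^sub>v x) $ j = 0"
proof (cases "j \<in> \<beta>")
  case False
  have bn: "\<beta> \<subseteq> {..<n}" using rb A unfolding rows_basis_def by auto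
  obtain c where c: "\<forall>k<n. A $$ (j, k) = (\<Sum>b\<in>\<beta>. c b * A $$ (b, k))" "\<forall>i\<in>\<alpha>. c i = 0"
    using rows_basis_row_lincomb_vanishing[OF A sym rb j(1) False \<alpha> van] by blast
  have "(A *\<^sub>v x) $ j = (\<Sum>b\<in>\<beta>. c b * (A *\<^sub>v x) $ b)"
    by (rule mult_mat_vec_row_lincomb[OF A x j(1) bn c(1)])
  also have "\<dots> = 0" using zero c(2) by (intro sum.neutral) auto
  finally show ?thesis .
qed (use zero j in auto)

lemma princ_sub_carrier_mat:
  assumes "A \<in> carrier_mat n n" "\<beta> \<subseteq> {..<n}"
  shows "princ_sub A \<beta> \<in> carrier_mat (card \<beta>) (card \<beta>)"
  using submatrix_carrier_mat[OF assms(1), of \<beta> \<beta>] unfolding princ_sub_def card_bounded_eq[OF assms(2)] .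

lemma kernel_princ_sub_rows_basis:
  fixes A :: "real mat"
  assumes A: "A \<in> carrier_mat n n" and sym: "A\<^sup>T = A" and rb: "rows_basis A \<beta>"
  shows "mat_kernel (princ_sub A \<beta>) = {0\<^sub>v (card \<beta>)}"
proof -
  have bn: "\<beta> \<subseteq> {..<n}" using rb A unfolding rows_basis_def by auto
  have r: "card {i. i < n \<and> i \<in> \<beta>} = card \<beta>" by (rule card_bounded_eq[OF bn])
  have S: "princ_sub A \<beta> \<in> carrier_mat (card \<beta>) (card \<beta>)" by (rule princ_sub_carrier_mat[OF A bn])
  have "u = 0\<^sub>v (card \<beta>)" if u: "u \<in> mat_kernel (princ_sub A \<beta>)" for u
  proof -
    have uc: "u \<in> carrier_vec (card {i. i < n \<and> i \<in> \<beta>})" using mat_kernelD(1)[OF S u] r by simp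
    define x where "x = extend_vec \<beta> n u"
    have "restrict_vec \<beta> n (A *\<^sub>v x) = 0\<^sub>v (card {i. i < n \<and> i \<in> \<beta>})"
      using mat_kernelD(2)[OF S u] submatrix_mult_vec[OF A uc, of \<beta>] r
      unfolding princ_sub_def x_def by simp
    moreover have "A *\<^sub>v x \<in> carrier_vec n" using A by (simp add: x_def)
    ultimately have "\<forall>t<n. t \<in> \<beta> \<longrightarrow> (A *\<^sub>v x) $ t = 0"
      using restrict_vec_eq_0_iff by blast
    then have Ax\<beta>: "\<forall>b\<in>\<beta>. (A *\<^sub>v x) $ b = 0" using bn by auto
    have "(A *\<^sub>v x) $ j = 0" if "j < n" for j
      by (rule rows_basis_mult_vec_eq_0[OF A sym rb, of "{}"]) (use that Ax\<beta> x_def in auto)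
    then have "x \<in> mat_kernel A"
      using A by (intro mat_kernelI[OF A]) (auto simp: x_def intro!: eq_vecI)
    then have "\<forall>t<n. t \<in> \<beta> \<longrightarrow> x $ t = 0"
      using rows_basis_kernel_supported[OF A sym rb] by (auto simp: x_def extend_vec_index)
    then have "restrict_vec \<beta> n x = 0\<^sub>v (card {i. i < n \<and> i \<in> \<beta>})"
      using restrict_vec_eq_0_iff[of x n \<beta>] by (simp add: x_def)
    then show ?thesis using restrict_extend_vec[OF uc] r unfolding x_def by simp
  qed
  moreover have "0\<^sub>v (card \<beta>) \<in> mat_kernel (princ_sub A \<beta>)"
    by (rule mat_kernelI[OF S]) (use S in \<open>auto intro!: eq_vecI\<close>)
  ultimately show ?thesis by blast
qed

lemma rows_basis_extend_solution:
  fixes A :: "real mat"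
  assumes A: "A \<in> carrier_mat n n" and sym: "A\<^sup>T = A" and rb: "rows_basis A \<beta>"
    and \<alpha>: "\<alpha> \<subseteq> \<beta>" and van: "\<forall>x\<in>mat_kernel A. \<forall>i\<in>\<alpha>. x $ i = 0"
    and u: "u \<in> carrier_vec (card \<beta>)" "\<forall>i\<in>pos_in \<beta> ` \<alpha>. u $ i = 0"
    and Su: "princ_sub A \<beta> *\<^sub>v u = extend_vec (pos_in \<beta> ` \<alpha>) (card \<beta>) v"
  shows "\<forall>i\<in>\<alpha>. extend_vec \<beta> n u $ i = 0" and "A *\<^sub>v extend_vec \<beta> n u = extend_vec \<alpha> n v"
proof -
  let ?x = "extend_vec \<beta> n u"
  have bn: "\<beta> \<subseteq> {..<n}" using rb A unfolding rows_basis_def by auto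
  have fin: "finite \<beta>" using bn finite_subset by blast
  have r: "card {i. i < n \<and> i \<in> \<beta>} = card \<beta>" by (rule card_bounded_eq[OF bn])
  have pos_mem: "pos_in \<beta> b \<in> pos_in \<beta> ` \<alpha> \<longleftrightarrow> b \<in> \<alpha>" if "b \<in> \<beta>" for b
    using inj_on_pos_in[OF fin] that \<alpha> by (auto dest: inj_onD)
  show "\<forall>i\<in>\<alpha>. ?x $ i = 0" using u(2) \<alpha> bn by (auto simp: extend_vec_index)
  have Ax\<beta>: "(A *\<^sub>v ?x) $ b = extend_vec \<alpha> n v $ b" if b: "b \<in> \<beta>" for b
  proof -
    have bn': "b < n" using b bn by auto
    have p: "pos_in \<beta> b < card {i. i < n \<and> i \<in> \<beta>}" using pos_in_less_card[OF b bn'] .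
    have "(A *\<^sub>v ?x) $ b = restrict_vec \<beta> n (A *\<^sub>v ?x) $ pos_in \<beta> b"
      by (simp only: restrict_vec_index[OF p] pick_pos_in[OF b])
    also have "\<dots> = (princ_sub A \<beta> *\<^sub>v u) $ pos_in \<beta> b"
      using submatrix_mult_vec[OF A, of u \<beta> \<beta>] u(1) r unfolding princ_sub_def by simp
    also have "\<dots> = extend_vec \<alpha> n v $ b"
      using Su p r pos_mem[OF b] pos_in_image_pos_in[OF fin \<alpha>] bn' by (auto simp: extend_vec_index)
    finally show ?thesis .
  qed
  have "(A *\<^sub>v ?x) $ j = extend_vec \<alpha> n v $ j" if j: "j < n" for j
  proof (cases "j \<in> \<beta>")
    case False
    have "\<forall>b\<in>\<beta> - \<alpha>. (A *\<^sub>v ?x) $ b = 0"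
    proof
      fix b assume b: "b \<in> \<beta> - \<alpha>"
      then have "b < n" using bn by auto
      then show "(A *\<^sub>v ?x) $ b = 0" using Ax\<beta>[of b] b by (simp add: extend_vec_index)
    qed
    then have "(A *\<^sub>v ?x) $ j = 0"
      by (rule rows_basis_mult_vec_eq_0[OF A sym rb \<alpha> van extend_vec_carrier _ j]) (use False \<alpha> in auto)
    then show ?thesis using False \<alpha> j by (auto simp: extend_vec_index)
  qed (use Ax\<beta> in simp)
  then show "A *\<^sub>v ?x = extend_vec \<alpha> n v" using A by (intro eq_vecI) auto
qed

lemma rows_basis_solvable_lift:
  fixes A :: "real mat"
  assumes A: "A \<in> carrier_mat n n" and sym: "A\<^sup>T = A" and rb: "rows_basis A \<beta>"
    and \<alpha>: "\<alpha> \<subseteq> \<beta>" and van: "\<forall>x\<in>mat_kernel A. \<forall>i\<in>\<alpha>. x $ i = 0"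
    and solvable: "\<forall>v\<in>carrier_vec (card (pos_in \<beta> ` \<alpha>)). \<exists>u\<in>carrier_vec (card \<beta>).
      (\<forall>i\<in>pos_in \<beta> ` \<alpha>. u $ i = 0) \<and> princ_sub A \<beta> *\<^sub>v u = extend_vec (pos_in \<beta> ` \<alpha>) (card \<beta>) v"
  shows "\<forall>v\<in>carrier_vec (card \<alpha>).
    \<exists>x\<in>carrier_vec n. (\<forall>i\<in>\<alpha>. x $ i = 0) \<and> A *\<^sub>v x = extend_vec \<alpha> n v"
proof
  fix v :: "real vec" assume v: "v \<in> carrier_vec (card \<alpha>)"
  have "\<beta> \<subseteq> {..<n}" using rb A unfolding rows_basis_def by auto
  then have fin: "finite \<beta>" using finite_subset by blast
  have "v \<in> carrier_vec (card (pos_in \<beta> ` \<alpha>))"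
    using v unfolding pos_in_image_bounds(2)[OF fin \<alpha>] .
  then obtain u where u: "u \<in> carrier_vec (card \<beta>)" "\<forall>i\<in>pos_in \<beta> ` \<alpha>. u $ i = 0"
    "princ_sub A \<beta> *\<^sub>v u = extend_vec (pos_in \<beta> ` \<alpha>) (card \<beta>) v"
    using solvable by blast
  show "\<exists>x\<in>carrier_vec n. (\<forall>i\<in>\<alpha>. x $ i = 0) \<and> A *\<^sub>v x = extend_vec \<alpha> n v"
    using rows_basis_extend_solution[OF A sym rb \<alpha> van u]
    by (intro bexI[OF _ extend_vec_carrier]) simp
qed

theorem corollary2p3:
  fixes A :: "real mat" and n :: nat and \<alpha> \<beta> :: "nat set"
  assumes "A \<in> carrier_mat n n"
    and "A\<^sup>T = A"
    and "\<alpha> \<subseteq> {..<n}" and "\<beta> \<subseteq> {..<n}"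
    and "\<forall>i\<in>\<alpha>. P_vertex A i"
    and "\<alpha> \<subseteq> \<beta>"
    and "rows_basis A \<beta>"
    and "P_set (princ_sub A \<beta>) (pos_in \<beta> ` \<alpha>)"
  shows "P_set A \<alpha>"
proof -
  note A = assms(1) and sym = assms(2) and \<alpha> = assms(3) and \<beta> = assms(4) and \<alpha>\<beta> = assms(6)
    and rb = assms(7)
  have van: "\<forall>x\<in>mat_kernel A. \<forall>i\<in>\<alpha>. x $ i = 0"
    using P_vertex_kernel_vanishes[OF A] assms(5) by blast
  have "finite \<beta>" using \<beta> finite_subset by blast
  note \<alpha>' = pos_in_image_bounds(1)[OF this \<alpha>\<beta>]
  have van_S: "\<forall>x\<in>mat_kernel (princ_sub A \<beta>). \<forall>i\<in>pos_in \<beta> ` \<alpha>. x $ i = 0"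
    using kernel_princ_sub_rows_basis[OF A sym rb] \<alpha>' by auto
  have "\<forall>v\<in>carrier_vec (card (pos_in \<beta> ` \<alpha>)). \<exists>u\<in>carrier_vec (card \<beta>).
      (\<forall>i\<in>pos_in \<beta> ` \<alpha>. u $ i = 0) \<and> princ_sub A \<beta> *\<^sub>v u = extend_vec (pos_in \<beta> ` \<alpha>) (card \<beta>) v"
    using assms(8) unfolding P_set_iff_solvable[OF princ_sub_carrier_mat[OF A \<beta>] \<alpha>' van_S] .
  then have "\<forall>v\<in>carrier_vec (card \<alpha>).
      \<exists>x\<in>carrier_vec n. (\<forall>i\<in>\<alpha>. x $ i = 0) \<and> A *\<^sub>v x = extend_vec \<alpha> n v"
    by (rule rows_basis_solvable_lift[OF A sym rb \<alpha>\<beta> van])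
  then show ?thesis unfolding P_set_iff_solvable[OF A \<alpha> van] .
qed

end
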